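(* Let $S$ be the set of matrices $C \in \mathbb{F}_2^{4\times 4}$ with $\mathrm{rank}_{\mathbb{F}_2}(C)=4$ that are not $(2,2)$-Hadamard expressible over $\mathbb{F}_2$ (this set has $5{,}304$ elements). For every $C \in S$, regarding $C$ as an integer matrix with entries in $\{0,1\}$, there do not exist integer matrices $A, B \in \mathbb{Z}^{4\times 4}$ with $\mathrm{rank}(A) \le 2$ and $\mathrm{rank}(B) \le 2$ such that $C = A \circ B$ (entrywise product in $\mathbb{Z}$). That is, every element of $S$ remains a counterexample over $\mathbb{Z}$.
   Context: The Hadamard product of two $m\times n$ matrices $A=(a_{ij})$ and $B=(b_{ij})$ is the $m\times n$ matrix $A\circ B=(a_{ij}b_{ij})$. A matrix $M \in \mathbb{F}_2^{4\times 4}$ is called $(2,2)$-Hadamard expressible over $\mathbb{F}_2$ if there exist $A, B \in \mathbb{F}_2^{4\times 4}$ with $\mathrm{rank}_{\mathbb{F}_2}(A) \le 2$ and $\mathrm{rank}_{\mathbb{F}_2}(B) \le 2$ such that $M = A\circ B$. For integer matrices, rank means rank over $\mathbb{Q}$ (equivalently over $\mathbb{R}$). *)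

theory Defs
  imports "Jordan_Normal_Form.DL_Rank" "HOL-Library.Z2"
begin

definition hadamard :: "'a::times mat \<Rightarrow> 'a mat \<Rightarrow> 'a mat" where
  "hadamard A B = mat (dim_row A) (dim_col A) (\<lambda>(i,j). A $$ (i,j) * B $$ (i,j))"

definition hadamard_22_expressible_F2 :: "bit mat \<Rightarrow> bool" where
  "hadamard_22_expressible_F2 M \<longleftrightarrow>
     (\<exists>A B. A \<in> carrier_mat 4 4 \<and> B \<in> carrier_mat 4 4 \<and>
        vec_space.rank 4 A \<le> 2 \<and> vec_space.rank 4 B \<le> 2 \<and> M = hadamard A B)"

definition int_rank :: "int mat \<Rightarrow> nat" where
  "int_rank A = vec_space.rank (dim_row A) (map_mat (of_int :: int \<Rightarrow> rat) A)"

end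

theory Submission
  imports Defs
begin

(* Reduction modulo 2 maps an integer factorisation map_mat of_bit C = A \<circ> B to a factorisation
   C = (A mod 2) \<circ> (B mod 2) over F_2, and it does not increase rank: columns of A that are
   independent mod 2 are independent over Q, since a rational dependency can be scaled to an
   integral one and then halved until some coefficient is odd, which gives a dependency mod 2.
   So C would be (2,2)-Hadamard expressible over F_2. *)

lemma of_int_bit_eq_0_iff [simp]: "(of_int k :: bit) = 0 \<longleftrightarrow> even k"
  using even_of_int_iff[of k, where ?'a = bit] by (cases "of_int k :: bit") auto

lemma abs_div_2_less: "even (a::int) \<Longrightarrow> a \<noteq> 0 \<Longrightarrow> \<bar>a div 2\<bar> < \<bar>a\<bar>"
  by (auto elim!: evenE simp: abs_if)

lemma int_vec_eq_pow2_smult_odd: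
  fixes y :: "int vec"
  assumes "y \<in> carrier_vec m" "y \<noteq> 0\<^sub>v m"
  shows "\<exists>k y'. y' \<in> carrier_vec m \<and> y = 2 ^ k \<cdot>\<^sub>v y' \<and> (\<exists>j<m. odd (y' $ j))"
  using assms
proof (induction "\<Sum>j<m. nat \<bar>y $ j\<bar>" arbitrary: y rule: less_induct)
  case less
  show ?case
  proof (cases "\<exists>j<m. odd (y $ j)")
    case True
    then show ?thesis
      using less.prems(1) by (intro exI[of _ 0] exI[of _ y]) auto
  next
    case False
    define h where "h = map_vec (\<lambda>a. a div 2) y"
    have h: "h \<in> carrier_vec m" using less.prems(1) by (simp add: h_def)
    have y_eq: "y = 2 \<cdot>\<^sub>v h"
      using False less.prems(1) by (intro eq_vecI) (auto simp: h_def)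
    have "h \<noteq> 0\<^sub>v m" using y_eq less.prems(2) by auto
    moreover have "(\<Sum>j<m. nat \<bar>h $ j\<bar>) < (\<Sum>j<m. nat \<bar>y $ j\<bar>)"
    proof (rule sum_strict_mono_ex1)
      obtain j where "j < m" "y $ j \<noteq> 0"
        using less.prems by (auto simp: vec_eq_iff)
      then show "\<exists>j\<in>{..<m}. nat \<bar>h $ j\<bar> < nat \<bar>y $ j\<bar>"
        using False less.prems(1) abs_div_2_less by (auto simp: h_def)
    qed (use less.prems(1) in \<open>auto simp: h_def\<close>)
    ultimately obtain k y' where "y' \<in> carrier_vec m" "h = 2 ^ k \<cdot>\<^sub>v y'" "\<exists>j<m. odd (y' $ j)"
      using less.hyps h by blast
    then show ?thesis
      using y_eq by (intro exI[of _ "Suc k"] exI[of _ y']) (auto simp: smult_smult_assoc)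
  qed
qed

lemma int_kernel_imp_bit_kernel:
  fixes N :: "int mat"
  assumes N: "N \<in> carrier_mat n m"
    and y: "y \<in> carrier_vec m" "y \<noteq> 0\<^sub>v m" and Ny: "N *\<^sub>v y = 0\<^sub>v n"
  shows "\<exists>z :: bit vec. z \<in> carrier_vec m \<and> z \<noteq> 0\<^sub>v m \<and> map_mat of_int N *\<^sub>v z = 0\<^sub>v n"
proof -
  obtain k y' j where y': "y' \<in> carrier_vec m" "y = 2 ^ k \<cdot>\<^sub>v y'" and j: "j < m" "odd (y' $ j)"
    using int_vec_eq_pow2_smult_odd[OF y] by blast
  have "(N *\<^sub>v y') $ i = 0" if "i < n" for i
  proof -
    have "2 ^ k * (N *\<^sub>v y') $ i = (N *\<^sub>v y) $ i" using that N y' by simp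
    then show ?thesis using Ny that by simp
  qed
  then have Ny': "N *\<^sub>v y' = 0\<^sub>v n"
    using N by (intro eq_vecI) auto
  define z where "z = map_vec (of_int :: int \<Rightarrow> bit) y'"
  have "z $ j \<noteq> 0" using j y' by (simp add: z_def)
  then have "z \<noteq> 0\<^sub>v m" using j by auto
  moreover have "map_mat of_int N *\<^sub>v z = 0\<^sub>v n"
    unfolding z_def using of_int_hom.mult_mat_vec_hom[OF N y'(1), symmetric] Ny'
    by (simp add: of_int_hom.vec_hom_zero)
  moreover have "z \<in> carrier_vec m" using y'(1) by (simp add: z_def)
  ultimately show ?thesis by blast
qed

lemma rat_kernel_imp_int_kernel:
  fixes N :: "int mat" and x :: "rat vec"
  assumes N: "N \<in> carrier_mat n m"
    and x: "x \<in> carrier_vec m" "x \<noteq> 0\<^sub>v m" and Nx: "map_mat of_int N *\<^sub>v x = 0\<^sub>v n"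
  shows "\<exists>y. y \<in> carrier_vec m \<and> y \<noteq> 0\<^sub>v m \<and> N *\<^sub>v y = 0\<^sub>v n"
proof -
  define p where "p j = fst (quotient_of (x $ j))" for j
  define q where "q j = snd (quotient_of (x $ j))" for j
  define D where "D = (\<Prod>j<m. q j)"
  have q_pos: "q j > 0" for j
    unfolding q_def by (rule quotient_of_denom_pos')
  have x_eq: "x $ j = of_int (p j) / of_int (q j)" for j
    unfolding p_def q_def by (rule quotient_of_div) simp
  have "D > 0" unfolding D_def using q_pos by (simp add: prod_pos)
  define y where "y = vec m (\<lambda>j. p j * (D div q j))"
  have y: "y \<in> carrier_vec m" by (simp add: y_def)
  have y_x: "map_vec (of_int :: int \<Rightarrow> rat) y = of_int D \<cdot>\<^sub>v x"
  proof (rule eq_vecI)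
    fix j assume "j < dim_vec (of_int D \<cdot>\<^sub>v x)"
    then have j: "j < m" using x by simp
    have "q j dvd D" unfolding D_def using j by (intro dvd_prodI) auto
    then obtain k where "D = q j * k" by (elim dvdE)
    then show "map_vec of_int y $ j = (of_int D \<cdot>\<^sub>v x) $ j"
      using j q_pos[of j] x(1) by (simp add: y_def x_eq)
  qed (use x in \<open>simp add: y_def\<close>)
  have "map_vec (of_int :: int \<Rightarrow> rat) (N *\<^sub>v y) = map_mat of_int N *\<^sub>v map_vec of_int y"
    by (rule of_int_hom.mult_mat_vec_hom[OF N y])
  also have "\<dots> = of_int D \<cdot>\<^sub>v (map_mat of_int N *\<^sub>v x)"
    unfolding y_x using N x(1) by (simp add: mult_mat_vec)
  also have "\<dots> = map_vec of_int (0\<^sub>v n)" unfolding Nx by auto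
  finally have "N *\<^sub>v y = 0\<^sub>v n" by (rule of_int_hom.vec_hom_inj)
  moreover have "y \<noteq> 0\<^sub>v m"
  proof
    assume "y = 0\<^sub>v m"
    then have "of_int D \<cdot>\<^sub>v x = 0\<^sub>v m" using y_x by (simp add: of_int_hom.vec_hom_zero)
    then show False using \<open>D > 0\<close> x by (auto simp: vec_eq_iff)
  qed
  ultimately show ?thesis using y by blast
qed

lemma rat_kernel_imp_bit_kernel:
  fixes N :: "int mat" and x :: "rat vec"
  assumes "N \<in> carrier_mat n m"
    and "x \<in> carrier_vec m" "x \<noteq> 0\<^sub>v m" "map_mat of_int N *\<^sub>v x = 0\<^sub>v n"
  shows "\<exists>z :: bit vec. z \<in> carrier_vec m \<and> z \<noteq> 0\<^sub>v m \<and> map_mat of_int N *\<^sub>v z = 0\<^sub>v n"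
  using rat_kernel_imp_int_kernel[OF assms] int_kernel_imp_bit_kernel[OF assms(1)] by blast

lemma (in vec_space) rank_eq_card_indpt_col_indices:
  assumes A: "A \<in> carrier_mat n nc"
  obtains J where "J \<subseteq> {..<nc}" "inj_on (col A) J" "lin_indpt (col A ` J)" "rank A = card J"
proof -
  obtain S where S: "maximal S (\<lambda>T. T \<subseteq> set (cols A) \<and> lin_indpt T)"
    using maximal_exists[of "\<lambda>T. T \<subseteq> set (cols A) \<and> lin_indpt T" "card (set (cols A))" "{}"]
    by (meson List.finite_set card_mono empty_iff empty_subsetI finite_lin_indpt2 rev_finite_subset)
  have "set (cols A) = col A ` {..<nc}"
    using A by (simp add: cols_def atLeast0LessThan)
  then have "S \<subseteq> col A ` {..<nc}"
    using S by (simp add: maximal_def)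
  then obtain J where J: "J \<subseteq> {..<nc}" "inj_on (col A) J" "S = col A ` J"
    unfolding subset_image_inj by blast
  moreover have "lin_indpt (col A ` J)"
    using S J(3) by (simp add: maximal_def)
  moreover have "rank A = card J"
    using rank_card_indpt[OF A S] J(2,3) by (simp add: card_image)
  ultimately show thesis using that by blast
qed

lemma lin_indpt_cols_of_int_bit_imp_rat:
  fixes N :: "int mat"
  assumes N: "N \<in> carrier_mat n k"
    and distinct: "distinct (cols (map_mat (of_int :: int \<Rightarrow> bit) N))"
      "distinct (cols (map_mat (of_int :: int \<Rightarrow> rat) N))"
    and indpt: "LinearCombinations.module.lin_indpt class_ring (module_vec TYPE(bit) n)
      (set (cols (map_mat of_int N)))"
  shows "LinearCombinations.module.lin_indpt class_ring (module_vec TYPE(rat) n)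
    (set (cols (map_mat of_int N)))"
proof
  interpret F2: vec_space "TYPE(bit)" n .
  interpret Q: vec_space "TYPE(rat)" n .
  have N2: "map_mat (of_int :: int \<Rightarrow> bit) N \<in> carrier_mat n k"
    and NQ: "map_mat (of_int :: int \<Rightarrow> rat) N \<in> carrier_mat n k"
    using N by auto
  assume "Q.lin_dep (set (cols (map_mat of_int N)))"
  then obtain x :: "rat vec" where "x \<in> carrier_vec k" "x \<noteq> 0\<^sub>v k" "map_mat of_int N *\<^sub>v x = 0\<^sub>v n"
    by (rule Q.lin_depE[OF NQ _ distinct(2)])
  then obtain z :: "bit vec" where "z \<in> carrier_vec k" "z \<noteq> 0\<^sub>v k" "map_mat of_int N *\<^sub>v z = 0\<^sub>v n"
    using rat_kernel_imp_bit_kernel[OF N] by blast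
  then have "F2.lin_dep (set (cols (map_mat of_int N)))"
    by (rule F2.lin_depI[OF N2 _ _ _ distinct(1)])
  with indpt show False by blast
qed

lemma lin_indpt_col_image_of_int_bit_imp_rat:
  fixes A :: "int mat"
  defines "A2 \<equiv> map_mat (of_int :: int \<Rightarrow> bit) A" and "AQ \<equiv> map_mat (of_int :: int \<Rightarrow> rat) A"
  assumes A: "A \<in> carrier_mat n m" and J: "J \<subseteq> {..<m}" "inj_on (col A2) J"
    and indpt: "LinearCombinations.module.lin_indpt class_ring (module_vec TYPE(bit) n) (col A2 ` J)"
  shows "inj_on (col AQ) J"
    and "LinearCombinations.module.lin_indpt class_ring (module_vec TYPE(rat) n) (col AQ ` J)"
proof -
  have col_A2: "col A2 j = map_vec of_int (col A j)" and col_AQ: "col AQ j = map_vec of_int (col A j)"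
    if "j \<in> J" for j
    using that J(1) A by (auto simp: A2_def AQ_def)
  show inj_AQ: "inj_on (col AQ) J"
  proof (rule inj_onI)
    fix i j assume "i \<in> J" "j \<in> J" "col AQ i = col AQ j"
    then have "col A i = col A j" by (auto simp: col_AQ intro: of_int_hom.vec_hom_inj)
    then have "col A2 i = col A2 j" using \<open>i \<in> J\<close> \<open>j \<in> J\<close> by (simp add: col_A2)
    then show "i = j" using inj_onD[OF J(2)] \<open>i \<in> J\<close> \<open>j \<in> J\<close> by blast
  qed
  define js where "js = sorted_list_of_set J"
  have "finite J" using J(1) finite_subset by blast
  then have js: "distinct js" "set js = J" by (simp_all add: js_def)
  define N where "N = mat_of_cols n (map (col A) js)"
  have cols_A: "set (map (col A) js) \<subseteq> carrier_vec n" using A by auto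
  have cols_N2: "cols (map_mat (of_int :: int \<Rightarrow> bit) N) = map (col A2) js"
    unfolding N_def mat_of_cols_map[OF cols_A, symmetric] using cols_A js(2)
    by (subst cols_mat_of_cols) (auto simp: col_A2)
  have cols_NQ: "cols (map_mat (of_int :: int \<Rightarrow> rat) N) = map (col AQ) js"
    unfolding N_def mat_of_cols_map[OF cols_A, symmetric] using cols_A js(2)
    by (subst cols_mat_of_cols) (auto simp: col_AQ)
  have "N \<in> carrier_mat n (length js)"
    unfolding N_def using mat_of_cols_carrier(1)[of n "map (col A) js"] by simp
  from lin_indpt_cols_of_int_bit_imp_rat[OF this]
  show "LinearCombinations.module.lin_indpt class_ring (module_vec TYPE(rat) n) (col AQ ` J)"
    using J(2) inj_AQ js indpt by (simp add: cols_N2 cols_NQ distinct_map)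
qed

lemma rank_of_int_bit_le_rank_of_int_rat:
  fixes A :: "int mat"
  assumes A: "A \<in> carrier_mat n m"
  shows "vec_space.rank n (map_mat (of_int :: int \<Rightarrow> bit) A)
    \<le> vec_space.rank n (map_mat (of_int :: int \<Rightarrow> rat) A)"
proof -
  interpret F2: vec_space "TYPE(bit)" n .
  interpret Q: vec_space "TYPE(rat)" n .
  let ?A2 = "map_mat (of_int :: int \<Rightarrow> bit) A" and ?AQ = "map_mat (of_int :: int \<Rightarrow> rat) A"
  obtain J where J: "J \<subseteq> {..<m}" "inj_on (col ?A2) J" "F2.lin_indpt (col ?A2 ` J)"
    and rank_A2: "F2.rank ?A2 = card J"
    using F2.rank_eq_card_indpt_col_indices[of ?A2 m] A by auto
  have "inj_on (col ?AQ) J" "Q.lin_indpt (col ?AQ ` J)"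
    using lin_indpt_col_image_of_int_bit_imp_rat[OF A J] by auto
  moreover have "col ?AQ ` J \<subseteq> set (cols ?AQ)"
    using J(1) A by (auto simp: cols_def)
  ultimately have "card (col ?AQ ` J) \<le> Q.rank ?AQ"
    using Q.rank_ge_card_indpt[of ?AQ m] A by auto
  then show ?thesis
    using rank_A2 \<open>inj_on (col ?AQ) J\<close> by (simp add: card_image)
qed

lemma map_mat_hadamard:
  assumes "A \<in> carrier_mat n m" "B \<in> carrier_mat n m" and "\<And>x y. f (x * y) = f x * f y"
  shows "map_mat f (hadamard A B) = hadamard (map_mat f A) (map_mat f B)"
  using assms by (intro eq_matI) (auto simp: hadamard_def)

theorem mainTheorem2:
  fixes C :: "bit mat"
  assumes "C \<in> carrier_mat 4 4"
    and "vec_space.rank 4 C = 4"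
    and "\<not> hadamard_22_expressible_F2 C"
  shows "\<not> (\<exists>A B :: int mat. A \<in> carrier_mat 4 4 \<and> B \<in> carrier_mat 4 4 \<and>
             int_rank A \<le> 2 \<and> int_rank B \<le> 2 \<and>
             map_mat of_bit C = hadamard A B)"
proof
  assume "\<exists>A B :: int mat. A \<in> carrier_mat 4 4 \<and> B \<in> carrier_mat 4 4 \<and>
             int_rank A \<le> 2 \<and> int_rank B \<le> 2 \<and>
             map_mat of_bit C = hadamard A B"
  then obtain A B :: "int mat" where A: "A \<in> carrier_mat 4 4" and B: "B \<in> carrier_mat 4 4"
    and rank_A: "int_rank A \<le> 2" and rank_B: "int_rank B \<le> 2"
    and C_eq: "map_mat of_bit C = hadamard A B"
    by blast
  let ?A2 = "map_mat (of_int :: int \<Rightarrow> bit) A" and ?B2 = "map_mat (of_int :: int \<Rightarrow> bit) B"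
  have "C = map_mat of_int (map_mat of_bit C :: int mat)"
    using assms(1) by (intro eq_matI) (auto simp: of_bool_def)
  also have "\<dots> = hadamard ?A2 ?B2"
    unfolding C_eq using A B by (intro map_mat_hadamard) auto
  finally have "C = hadamard ?A2 ?B2" .
  moreover have "vec_space.rank 4 ?A2 \<le> 2" "vec_space.rank 4 ?B2 \<le> 2"
    using rank_of_int_bit_le_rank_of_int_rat[OF A] rank_of_int_bit_le_rank_of_int_rat[OF B]
      rank_A rank_B A B by (auto simp: int_rank_def)
  moreover have "?A2 \<in> carrier_mat 4 4" "?B2 \<in> carrier_mat 4 4" using A B by auto
  ultimately have "hadamard_22_expressible_F2 C"
    unfolding hadamard_22_expressible_F2_def by blast
  with assms(3) show False ..
qed

end
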